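(* Let $t>0$, $x\in\mathbb{R}^d$, $n\ge1$ and $0<t_1<\dots<t_n<t$. For any $h=h_1\otimes\dots\otimes h_n$ with $h_i\in C_0^\infty(\mathbb{R}^d)$, $$(\mathcal{F}f_n(t_1,\cdot,\dots,t_n,\cdot,t,x),h)=\int_{\mathbb{R}^{nd}}h(\xi_1,\dots,\xi_n)e^{-i(\xi_1+\dots+\xi_n)\cdot x}\overline{\mathcal{F}G(t_2-t_1,\cdot)(\xi_1)}\,\overline{\mathcal{F}G(t_3-t_2,\cdot)(\xi_1+\xi_2)}\cdots\overline{\mathcal{F}G(t-t_n,\cdot)(\xi_1+\dots+\xi_n)}\,d\xi_1\cdots d\xi_n.$$ That is, the Fourier transform of $f_n(t_1,\cdot,\dots,t_n,\cdot,t,x)$ is the function $e^{-i(\xi_1+\dots+\xi_n)\cdot x}\prod_{j=1}^n\overline{\mathcal{F}G(t_{j+1}-t_j,\cdot)(\xi_1+\dots+\xi_j)}$ with $t_{n+1}=t$.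
   Context: $\mathcal{F}\phi(\xi)=\int_{\mathbb{R}^d}e^{-i\xi\cdot x}\phi(x)dx$, extended to $\mathcal{S}'$ by $(\mathcal{F}T,h)=(T,\mathcal{F}h)$. $G$ is the fundamental solution of the wave equation $\partial_t^2-\Delta$ on $\mathbb{R}^d$; for $s>0$, $G(s,\cdot)$ is a distribution of rapid decrease and $\mathcal{F}G(s,\cdot)(\xi)=\sin(s|\xi|)/|\xi|$; $*$ denotes convolution in the space variable. For $0<t_1<\dots<t_n<t$, $f_n(t_1,\cdot,\dots,t_n,\cdot,t,x)$ is the distribution on $\mathbb{R}^{nd}$ defined on test functions $\phi=\phi_1\otimes\dots\otimes\phi_n$ ($\phi_i\in\mathcal{S}(\mathbb{R}^d)$) by $(f_n(t_1,\cdot,\dots,t_n,\cdot,t,x),\phi)=\varphi_n(t_2-t_1,t_3-t_2,\dots,t-t_n,x)$, where recursively for $k=1,\dots,n$: $\psi_1=\phi_1$, $\psi_k(s_1,\dots,s_{k-1},\cdot)=\phi_k(\cdot)\varphi_{k-1}(s_1,\dots,s_{k-1},\cdot)$ for $k\ge2$, and $\varphi_k(s_1,\dots,s_k,\cdot)=\psi_k(s_1,\dots,s_{k-1},\cdot)*G(s_k,\cdot)$. *)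

theory Defs
  imports "HOL-Analysis.Analysis"
begin

text \<open>Space R^d is modelled by an arbitrary euclidean space 'a (d = DIM('a)).
  Functions / test functions are complex valued.\<close>

definition pderiv_dir :: "'a::euclidean_space \<Rightarrow> ('a \<Rightarrow> complex) \<Rightarrow> 'a \<Rightarrow> complex" where
  "pderiv_dir i f = (\<lambda>x. vector_derivative (\<lambda>t::real. f (x + t *\<^sub>R i)) (at 0))"

definition pderivs :: "'a::euclidean_space list \<Rightarrow> ('a \<Rightarrow> complex) \<Rightarrow> 'a \<Rightarrow> complex" where
  "pderivs is f = foldr pderiv_dir is f"

definition smooth_fn :: "('a::euclidean_space \<Rightarrow> complex) \<Rightarrow> bool" where
  "smooth_fn f \<longleftrightarrow> (\<forall>is. set is \<subseteq> Basis \<longrightarrow> (\<forall>x. pderivs is f differentiable (at x)))"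

definition schwartz :: "('a::euclidean_space \<Rightarrow> complex) \<Rightarrow> bool" where
  "schwartz f \<longleftrightarrow> smooth_fn f \<and>
     (\<forall>is. set is \<subseteq> Basis \<longrightarrow> (\<forall>m::nat. \<exists>C. \<forall>x. (1 + norm x) ^ m * norm (pderivs is f x) \<le> C))"

definition test_fn :: "('a::euclidean_space \<Rightarrow> complex) \<Rightarrow> bool" where
  "test_fn f \<longleftrightarrow> smooth_fn f \<and> compact (closure {x. f x \<noteq> 0})"

definition fourier :: "('a::euclidean_space \<Rightarrow> complex) \<Rightarrow> 'a \<Rightarrow> complex" where
  "fourier \<phi> = (\<lambda>\<xi>. \<integral>x. cis (- (\<xi> \<bullet> x)) * \<phi> x \<partial>lborel)"

text \<open>The function sin(s|xi|)/|xi| (= F G(s,.)).\<close>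
definition wave_hat :: "real \<Rightarrow> 'a::euclidean_space \<Rightarrow> real" where
  "wave_hat s \<xi> = sin (s * norm \<xi>) / norm \<xi>"

definition conv_dist :: "('a::euclidean_space \<Rightarrow> complex) \<Rightarrow> (('a \<Rightarrow> complex) \<Rightarrow> complex) \<Rightarrow> 'a \<Rightarrow> complex" where
  "conv_dist \<psi> T = (\<lambda>x. T (\<lambda>y. \<psi> (x - y)))"

text \<open>Recursion of the paper, 0-indexed: test functions phi 0..n-1 (paper phi_1..phi_n),
  time increments s 0..n-1 (paper s_1..s_n).
  wave_psi G phi s k is the paper's psi_{k+1}(s_1..s_k, .),
  wave_phi G phi s k is the paper's varphi_{k+1}(s_1..s_{k+1}, .).\<close>
fun wave_psi :: "(real \<Rightarrow> ('a::euclidean_space \<Rightarrow> complex) \<Rightarrow> complex) \<Rightarrow> (nat \<Rightarrow> 'a \<Rightarrow> complex)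
     \<Rightarrow> (nat \<Rightarrow> real) \<Rightarrow> nat \<Rightarrow> 'a \<Rightarrow> complex" where
  "wave_psi G \<phi> s 0 = \<phi> 0"
| "wave_psi G \<phi> s (Suc k) = (\<lambda>y. \<phi> (Suc k) y * conv_dist (wave_psi G \<phi> s k) (G (s k)) y)"

definition wave_phi :: "(real \<Rightarrow> ('a::euclidean_space \<Rightarrow> complex) \<Rightarrow> complex) \<Rightarrow> (nat \<Rightarrow> 'a \<Rightarrow> complex)
     \<Rightarrow> (nat \<Rightarrow> real) \<Rightarrow> nat \<Rightarrow> 'a \<Rightarrow> complex" where
  "wave_phi G \<phi> s k = conv_dist (wave_psi G \<phi> s k) (G (s k))"

text \<open>(f_n(t_1,.,...,t_n,.,t,x), phi_1 (x) ... (x) phi_n), with times tt 0..n-1 = t_1..t_n and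
  tt n = t.\<close>
definition f_pair :: "(real \<Rightarrow> ('a::euclidean_space \<Rightarrow> complex) \<Rightarrow> complex) \<Rightarrow> nat \<Rightarrow> (nat \<Rightarrow> real)
     \<Rightarrow> 'a \<Rightarrow> (nat \<Rightarrow> 'a \<Rightarrow> complex) \<Rightarrow> complex" where
  "f_pair G n tt x \<phi> = wave_phi G \<phi> (\<lambda>j. tt (Suc j) - tt j) (n - 1) x"

end

theory Submission
  imports Defs
begin

text \<open>Write \<open>w\<^sub>k(\<xi>) = \<Prod>\<^sub>i\<^sub><\<^sub>k h\<^sub>i(\<xi>\<^sub>i) \<Prod>\<^sub>j\<^sub><\<^sub>k \<F>G(s\<^sub>j)(\<xi>\<^sub>0 + \<dots> + \<xi>\<^sub>j)\<close> and
  \<open>\<Phi>\<^sub>k(y) = \<integral> w\<^sub>k(\<xi>) exp(-i (\<xi>\<^sub>0 + \<dots> + \<xi>\<^sub>k\<^sub>-\<^sub>1) \<cdot> y) d\<xi>\<close>, an integral over \<open>\<real>\<^sup>k\<^sup>d\<close>.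
  By induction on \<open>k\<close>, \<open>\<psi>\<^sub>k\<^sub>+\<^sub>1 = \<F>h\<^sub>k \<cdot> \<Phi>\<^sub>k\<close> and \<open>\<phi>\<^sub>k\<^sub>+\<^sub>1 = \<Phi>\<^sub>k\<^sub>+\<^sub>1\<close>. In the induction step,
  Fubini shows that \<open>z \<mapsto> \<psi>\<^sub>k\<^sub>+\<^sub>1(y - z)\<close> is the Fourier transform of
  \<open>\<eta> \<mapsto> exp(i \<eta> \<cdot> y) \<integral> w\<^sub>k(\<xi>) h\<^sub>k(-(\<xi>\<^sub>0 + \<dots> + \<xi>\<^sub>k\<^sub>-\<^sub>1) - \<eta>) d\<xi>\<close>. This is a superposition of
  translates of a test function, hence itself a test function (differentiate under the integral
  sign), so \<open>G(s\<^sub>k)\<close> acts on it by integration against \<open>\<F>G(s\<^sub>k)\<close>; a second application of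
  Fubini identifies the result with \<open>\<Phi>\<^sub>k\<^sub>+\<^sub>1(y)\<close>. As \<open>\<F>G\<close> is real, the complex conjugates
  in the statement are immaterial.\<close>

section \<open>Partial derivatives and test functions\<close>

lemma pderivs_Nil [simp]: "pderivs [] f = f"
  by (simp add: pderivs_def)

lemma pderivs_Cons [simp]: "pderivs (i # is) f = pderiv_dir i (pderivs is f)"
  by (simp add: pderivs_def)

lemma pderivs_append: "pderivs (is @ js) f = pderivs is (pderivs js f)"
  by (simp add: pderivs_def)

lemma pderiv_dir_has_derivative:
  assumes "(f has_derivative D) (at x)"
  shows "pderiv_dir i f x = D i"
proof -
  have "((\<lambda>t::real. x + t *\<^sub>R i) has_derivative (\<lambda>t. t *\<^sub>R i)) (at 0)"
    by (auto intro!: derivative_eq_intros)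
  hence "((\<lambda>t::real. f (x + t *\<^sub>R i)) has_derivative (\<lambda>t. D (t *\<^sub>R i))) (at 0)"
    using has_derivative_compose[of "\<lambda>t::real. x + t *\<^sub>R i" "\<lambda>t. t *\<^sub>R i" 0 UNIV f D] assms
    by (simp add: o_def)
  hence "((\<lambda>t::real. f (x + t *\<^sub>R i)) has_vector_derivative D i) (at 0)"
    unfolding has_vector_derivative_def
    using has_derivative_linear[OF assms] by (simp add: linear_scale)
  thus ?thesis
    unfolding pderiv_dir_def by (simp add: vector_derivative_at)
qed

lemma pderiv_dir_eq_0_outside_closure:
  assumes "x \<notin> closure {x. f x \<noteq> 0}"
  shows "pderiv_dir i f x = 0"
proof -
  obtain e where e: "e > 0" "ball x e \<subseteq> - closure {x. f x \<noteq> 0}"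
    using openE[of "- closure {x. f x \<noteq> 0}" x] assms by auto
  have "f y = 0" if "dist y x < e" for y
    using e(2) closure_subset[of "{x. f x \<noteq> 0}"] that by (auto simp: dist_commute)
  hence "(f has_derivative (\<lambda>_. 0)) (at x)"
    by (intro has_derivative_transform_within[OF has_derivative_const e(1)]) auto
  thus ?thesis
    by (simp add: pderiv_dir_has_derivative)
qed

lemma pderiv_dir_add:
  assumes "f differentiable at x" "g differentiable at x"
  shows "pderiv_dir i (\<lambda>x. f x + g x) x = pderiv_dir i f x + pderiv_dir i g x"
proof -
  obtain Df Dg where Df: "(f has_derivative Df) (at x)" and Dg: "(g has_derivative Dg) (at x)"
    using assms differentiable_def by metis
  show ?thesis
    using pderiv_dir_has_derivative[OF has_derivative_add[OF Df Dg]]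
      pderiv_dir_has_derivative[OF Df] pderiv_dir_has_derivative[OF Dg] by simp
qed

lemma pderiv_dir_mult:
  fixes f g :: "'a::euclidean_space \<Rightarrow> complex"
  assumes "f differentiable at x" "g differentiable at x"
  shows "pderiv_dir i (\<lambda>x. f x * g x) x = pderiv_dir i f x * g x + f x * pderiv_dir i g x"
proof -
  obtain Df Dg where Df: "(f has_derivative Df) (at x)" and Dg: "(g has_derivative Dg) (at x)"
    using assms differentiable_def by metis
  show ?thesis
    using pderiv_dir_has_derivative[OF has_derivative_mult[OF Df Dg]]
      pderiv_dir_has_derivative[OF Df] pderiv_dir_has_derivative[OF Dg] by (simp add: mult.commute)
qed

definition smooth_upto :: "nat \<Rightarrow> ('a::euclidean_space \<Rightarrow> complex) \<Rightarrow> bool" where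
  "smooth_upto k f \<longleftrightarrow>
     (\<forall>is. length is \<le> k \<longrightarrow> set is \<subseteq> Basis \<longrightarrow> (\<forall>x. pderivs is f differentiable (at x)))"

lemma smooth_fn_iff_smooth_upto: "smooth_fn f \<longleftrightarrow> (\<forall>k. smooth_upto k f)"
  unfolding smooth_fn_def smooth_upto_def by blast

lemma smooth_fn_differentiable: "smooth_fn f \<Longrightarrow> f differentiable (at x)"
  unfolding smooth_fn_def by (metis empty_subsetI list.set(1) pderivs_Nil)

lemma smooth_fn_continuous_on: "smooth_fn f \<Longrightarrow> continuous_on S f"
  by (meson differentiable_at_imp_differentiable_on differentiable_imp_continuous_on
      smooth_fn_differentiable)

lemma smooth_pderiv_dir:
  assumes "smooth_fn f" "i \<in> Basis"
  shows "smooth_fn (pderiv_dir i f)"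
  unfolding smooth_fn_def
proof (intro allI impI)
  fix "is" :: "'a list" and x
  assume "set is \<subseteq> Basis"
  hence "pderivs (is @ [i]) f differentiable at x"
    using assms unfolding smooth_fn_def by simp
  thus "pderivs is (pderiv_dir i f) differentiable at x"
    by (simp add: pderivs_append)
qed

lemma smooth_pderivs: "smooth_fn f \<Longrightarrow> set is \<subseteq> Basis \<Longrightarrow> smooth_fn (pderivs is f)"
  by (induction "is") (auto intro: smooth_pderiv_dir)

lemma pderivs_add:
  assumes "smooth_upto k u" "smooth_upto k v" "length is \<le> Suc k" "set is \<subseteq> Basis"
  shows "pderivs is (\<lambda>x. u x + v x) = (\<lambda>x. pderivs is u x + pderivs is v x)"
  using assms(3,4)
proof (induction "is")
  case (Cons i "is")
  hence "pderivs is u differentiable at x" "pderivs is v differentiable at x" for x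
    using assms(1,2) unfolding smooth_upto_def by auto
  thus ?case
    using Cons by (auto simp: pderiv_dir_add)
qed simp

text \<open>No Leibniz formula is needed: one differentiation turns \<open>f * g\<close> into a sum of two
  products of smooth functions, to which the induction hypothesis applies one order lower.\<close>
lemma smooth_upto_mult:
  fixes f g :: "'a::euclidean_space \<Rightarrow> complex"
  assumes "smooth_fn f" "smooth_fn g"
  shows "smooth_upto k (\<lambda>x. f x * g x)"
  using assms
proof (induction k arbitrary: f g)
  case 0
  thus ?case
    unfolding smooth_upto_def by (auto intro: differentiable_mult smooth_fn_differentiable)
next
  case (Suc k)
  show ?case
    unfolding smooth_upto_def
  proof (intro allI impI)
    fix "is" :: "'a list" and x
    assume len: "length is \<le> Suc k" and B: "set is \<subseteq> Basis"
    show "pderivs is (\<lambda>x. f x * g x) differentiable at x"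
    proof (cases "is" rule: rev_exhaust)
      case Nil
      thus ?thesis
        using Suc.prems by (auto intro: differentiable_mult smooth_fn_differentiable)
    next
      case (snoc js i)
      have i: "i \<in> Basis" and js: "set js \<subseteq> Basis" "length js \<le> k"
        using B len snoc by auto
      let ?f' = "pderiv_dir i f" and ?g' = "pderiv_dir i g"
      have IH: "smooth_upto k (\<lambda>x. ?f' x * g x)" "smooth_upto k (\<lambda>x. f x * ?g' x)"
        using Suc i by (auto intro: Suc.IH smooth_pderiv_dir)
      have "pderiv_dir i (\<lambda>x. f x * g x) = (\<lambda>x. ?f' x * g x + f x * ?g' x)"
        using Suc.prems by (intro ext) (simp add: pderiv_dir_mult smooth_fn_differentiable)
      hence "pderivs is (\<lambda>x. f x * g x) = pderivs js (\<lambda>x. ?f' x * g x + f x * ?g' x)"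
        using snoc by (simp add: pderivs_append)
      also have "\<dots> = (\<lambda>x. pderivs js (\<lambda>x. ?f' x * g x) x + pderivs js (\<lambda>x. f x * ?g' x) x)"
        using IH js by (intro pderivs_add) auto
      finally show ?thesis
        using IH js unfolding smooth_upto_def by auto
    qed
  qed
qed

lemma smooth_mult:
  fixes f g :: "'a::euclidean_space \<Rightarrow> complex"
  shows "smooth_fn f \<Longrightarrow> smooth_fn g \<Longrightarrow> smooth_fn (\<lambda>x. f x * g x)"
  by (simp add: smooth_fn_iff_smooth_upto smooth_upto_mult)

lemma pderivs_cis_inner:
  fixes y :: "'a::euclidean_space"
  shows "pderivs is (\<lambda>u. c * cis (u \<bullet> y)) =
    (\<lambda>u. (c * (\<Prod>i\<leftarrow>is. \<i> * of_real (i \<bullet> y))) * cis (u \<bullet> y))"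
proof (induction "is")
  case (Cons i "is")
  let ?c = "c * (\<Prod>i\<leftarrow>is. \<i> * of_real (i \<bullet> y))"
  have "((\<lambda>u. ?c * cis (u \<bullet> y)) has_derivative (\<lambda>v. ?c * ((v \<bullet> y) *\<^sub>R (\<i> * cis (u \<bullet> y))))) (at u)"
    for u
    by (auto intro!: derivative_eq_intros)
  hence "pderiv_dir i (\<lambda>u. ?c * cis (u \<bullet> y)) u = ?c * ((i \<bullet> y) *\<^sub>R (\<i> * cis (u \<bullet> y)))" for u
    by (rule pderiv_dir_has_derivative)
  thus ?case
    by (intro ext) (simp only: pderivs_Cons Cons.IH, simp add: scaleR_conv_of_real algebra_simps)
qed simp

lemma smooth_cis_inner: "smooth_fn (\<lambda>u. cis (u \<bullet> (y::'a::euclidean_space)))"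
proof -
  have "(\<lambda>u. c * cis (u \<bullet> y)) differentiable at x" for c :: complex and x
    by (auto intro!: derivative_eq_intros simp: differentiable_def)
  thus ?thesis
    unfolding smooth_fn_def using pderivs_cis_inner[of _ 1 y] by simp
qed

lemma pderiv_dir_reflect:
  assumes "f differentiable at (-x)"
  shows "pderiv_dir i (\<lambda>u. c * f (-u)) x = - c * pderiv_dir i f (-x)"
proof -
  obtain D where D: "(f has_derivative D) (at (-x))"
    using assms differentiable_def by blast
  have "((\<lambda>u. c * f (-u)) has_derivative (\<lambda>v. c * D (-v))) (at x)"
    using has_derivative_compose[of uminus uminus x UNIV f D] D
    by (auto intro!: has_derivative_mult_right derivative_eq_intros simp: o_def)
  moreover have "D (-i) = - D i"
    using has_derivative_linear[OF D] linear_neg by blast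
  ultimately show ?thesis
    using D by (simp add: pderiv_dir_has_derivative)
qed

lemma pderivs_reflect:
  assumes "smooth_fn f" "set is \<subseteq> Basis"
  shows "pderivs is (\<lambda>u. f (-u)) = (\<lambda>u. (-1) ^ length is * pderivs is f (-u))"
  using assms(2)
proof (induction "is")
  case (Cons i "is")
  have "pderivs is f differentiable at z" for z
    using smooth_pderivs[OF assms(1)] Cons.prems smooth_fn_differentiable by auto
  thus ?case
    using Cons by (intro ext) (simp add: pderiv_dir_reflect)
qed simp

lemma smooth_reflect:
  assumes "smooth_fn f"
  shows "smooth_fn (\<lambda>u. f (-u))"
  unfolding smooth_fn_def
proof (intro allI impI)
  fix "is" :: "'a list" and x
  assume B: "set is \<subseteq> Basis"
  have "pderivs is f differentiable at z" for z
    using smooth_pderivs[OF assms B] smooth_fn_differentiable by auto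
  hence "(\<lambda>u. pderivs is f (-u)) differentiable at x"
    by (rule differentiable_compose) (auto intro!: derivative_intros)
  thus "pderivs is (\<lambda>u. f (-u)) differentiable at x"
    unfolding pderivs_reflect[OF assms B] by simp
qed

lemma test_fn_iff_bounded: "test_fn f \<longleftrightarrow> smooth_fn f \<and> bounded {x. f x \<noteq> 0}"
  unfolding test_fn_def by (simp add: compact_closure)

lemma test_fn_smooth: "test_fn f \<Longrightarrow> smooth_fn f"
  by (simp add: test_fn_def)

lemma test_fn_support_bound:
  assumes "test_fn f"
  obtains R where "\<And>x. f x \<noteq> 0 \<Longrightarrow> norm x \<le> R"
  using assms unfolding test_fn_iff_bounded bounded_iff by auto

lemma test_fn_bounded:
  assumes "test_fn f"
  obtains B where "\<And>x. norm (f x) \<le> B"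
proof -
  let ?K = "closure {x. f x \<noteq> 0}"
  have "compact (f ` ?K)"
    using assms unfolding test_fn_def by (auto intro: compact_continuous_image smooth_fn_continuous_on)
  then obtain B where "\<forall>y\<in>f ` ?K. norm y \<le> B"
    unfolding bounded_iff by (meson compact_imp_bounded bounded_iff)
  hence "norm (f x) \<le> max B 0" for x
    using closure_subset[of "{x. f x \<noteq> 0}"] by (cases "f x = 0") force+
  thus ?thesis
    using that by blast
qed

lemma test_fn_pderiv_dir:
  assumes "test_fn f" "i \<in> Basis"
  shows "test_fn (pderiv_dir i f)"
proof -
  have "{x. pderiv_dir i f x \<noteq> 0} \<subseteq> closure {x. f x \<noteq> 0}"
    using pderiv_dir_eq_0_outside_closure by blast
  thus ?thesis
    using assms bounded_subset[OF bounded_closure]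
    unfolding test_fn_iff_bounded by (blast intro: smooth_pderiv_dir)
qed

lemma test_fn_pderivs: "test_fn f \<Longrightarrow> set is \<subseteq> Basis \<Longrightarrow> test_fn (pderivs is f)"
  by (induction "is") (auto intro: test_fn_pderiv_dir)

lemma test_fn_mult_smooth:
  fixes f g :: "'a::euclidean_space \<Rightarrow> complex"
  assumes "smooth_fn f" "test_fn g"
  shows "test_fn (\<lambda>x. f x * g x)"
proof -
  have "{x. f x * g x \<noteq> 0} \<subseteq> {x. g x \<noteq> 0}"
    by auto
  thus ?thesis
    using assms bounded_subset smooth_mult unfolding test_fn_iff_bounded by blast
qed

lemma test_fn_reflect:
  assumes "test_fn f"
  shows "test_fn (\<lambda>u. f (-u))"
proof -
  have "{x. f (-x) \<noteq> 0} = uminus ` {x. f x \<noteq> 0}"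
    by force
  thus ?thesis
    using assms smooth_reflect unfolding test_fn_iff_bounded by auto
qed

lemma schwartz_test_fn:
  assumes "test_fn f"
  shows "schwartz f"
  unfolding schwartz_def
proof (intro conjI allI impI)
  show "smooth_fn f"
    using assms by (rule test_fn_smooth)
  fix "is" :: "'a list" and m :: nat
  assume "set is \<subseteq> Basis"
  hence t: "test_fn (pderivs is f)"
    using test_fn_pderivs assms by blast
  obtain B where B: "\<And>x. norm (pderivs is f x) \<le> B"
    using test_fn_bounded[OF t] by blast
  obtain R where R: "\<And>x. pderivs is f x \<noteq> 0 \<Longrightarrow> norm x \<le> R"
    using test_fn_support_bound[OF t] by blast
  have "(1 + norm x) ^ m * norm (pderivs is f x) \<le> (1 + max R 0) ^ m * max B 0" for x
    using R[of x] B[of x] by (cases "pderivs is f x = 0") (auto intro!: mult_mono power_mono)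
  thus "\<exists>C. \<forall>x. (1 + norm x) ^ m * norm (pderivs is f x) \<le> C"
    by blast
qed

lemma test_fn_borel_measurable: "test_fn f \<Longrightarrow> f \<in> borel_measurable borel"
  by (intro borel_measurable_continuous_onI smooth_fn_continuous_on test_fn_smooth)

lemma test_fn_integrable:
  fixes f :: "'a::euclidean_space \<Rightarrow> complex"
  assumes "test_fn f"
  shows "integrable lborel f"
proof -
  obtain B where B: "\<And>x. norm (f x) \<le> B"
    using test_fn_bounded[OF assms] by blast
  obtain R where R: "\<And>x. f x \<noteq> 0 \<Longrightarrow> norm x \<le> R"
    using test_fn_support_bound[OF assms] by blast
  show ?thesis
  proof (rule Bochner_Integration.integrable_bound)
    show "integrable lborel (\<lambda>x. B *\<^sub>R indicator (cball (0::'a) R) x :: real)"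
      using emeasure_lborel_cball_finite[of "0::'a" R]
      by (intro integrable_scaleR_right integrable_real_indicator) auto
    show "f \<in> borel_measurable lborel"
      using test_fn_borel_measurable[OF assms] by simp
    have "norm (f x) \<le> norm (B *\<^sub>R indicator (cball (0::'a) R) x :: real)" for x
      using B[of x] R[of x] norm_ge_zero[of "f x"] by (cases "f x = 0") (auto simp: indicator_def)
    thus "AE x in lborel. norm (f x) \<le> norm (B *\<^sub>R indicator (cball (0::'a) R) x :: real)"
      by simp
  qed
qed

definition total_deriv :: "('a::euclidean_space \<Rightarrow> complex) \<Rightarrow> 'a \<Rightarrow> 'a \<Rightarrow> complex" where
  "total_deriv g u = (\<lambda>v. \<Sum>b\<in>Basis. (v \<bullet> b) *\<^sub>R pderiv_dir b g u)"

lemma total_deriv_has_derivative: "(total_deriv g u has_derivative total_deriv g u) F"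
  unfolding total_deriv_def by (auto intro!: derivative_eq_intros)

lemma smooth_fn_has_derivative:
  assumes "smooth_fn g"
  shows "(g has_derivative total_deriv g u) (at u)"
proof -
  obtain D where D: "(g has_derivative D) (at u)"
    using smooth_fn_differentiable[OF assms] differentiable_def by blast
  have lin: "linear D"
    using has_derivative_linear[OF D] .
  have "D v = total_deriv g u v" for v
  proof -
    have "D v = D (\<Sum>b\<in>Basis. (v \<bullet> b) *\<^sub>R b)"
      by (simp add: euclidean_representation)
    also have "\<dots> = total_deriv g u v"
      unfolding total_deriv_def
      by (simp add: linear_sum[OF lin] linear_scale[OF lin] pderiv_dir_has_derivative[OF D])
    finally show ?thesis .
  qed
  thus ?thesis
    using D by (metis ext)
qed

lemma test_fn_uniformly_continuous:
  assumes "test_fn g" "e > 0"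
  obtains d where "d > 0" "\<And>u v. dist u v < d \<Longrightarrow> dist (g u) (g v) < e"
proof -
  obtain R where R: "\<And>x. g x \<noteq> 0 \<Longrightarrow> norm x \<le> R"
    using test_fn_support_bound[OF assms(1)] by blast
  let ?K = "cball (0::'a) (R + 1)"
  have "uniformly_continuous_on ?K g"
    using assms(1) by (intro compact_uniformly_continuous smooth_fn_continuous_on test_fn_smooth) auto
  then obtain d where d: "d > 0" "\<And>u v. u \<in> ?K \<Longrightarrow> v \<in> ?K \<Longrightarrow> dist u v < d \<Longrightarrow> dist (g u) (g v) < e"
    unfolding uniformly_continuous_on_def using assms(2) by metis
  have "dist (g u) (g v) < e" if "dist u v < min d 1" for u v
  proof (cases "u \<in> ?K \<and> v \<in> ?K")
    case False
    hence "norm u > R \<and> norm v > R"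
      using that norm_triangle_ineq3[of u v] by (auto simp: dist_norm norm_minus_commute)
    hence "g u = 0" "g v = 0"
      using R by (meson not_le)+
    thus ?thesis
      using assms(2) by simp
  qed (use d that in auto)
  thus ?thesis
    using that d(1) by (metis min_less_iff_conj zero_less_one)
qed

lemma test_fn_uniformly_differentiable:
  assumes "test_fn g" "e > 0"
  obtains d where "d > 0" "\<And>u h. norm h < d \<Longrightarrow> norm (g (u + h) - g u - total_deriv g u h) \<le> e * norm h"
proof -
  define N where "N = real DIM('a)"
  have N: "N > 0"
    by (simp add: N_def)
  have "\<forall>b\<in>Basis. \<exists>d>0. \<forall>u v. dist u v < d \<longrightarrow> dist (pderiv_dir b g u) (pderiv_dir b g v) < e / N"
    using test_fn_uniformly_continuous[OF test_fn_pderiv_dir[OF assms(1)]] assms(2) N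
    by (metis divide_pos_pos)
  then obtain db where db: "\<And>b. b \<in> Basis \<Longrightarrow> db b > 0"
    "\<And>b u v. b \<in> Basis \<Longrightarrow> dist u v < db b \<Longrightarrow> dist (pderiv_dir b g u) (pderiv_dir b g v) < e / N"
    by metis
  define d where "d = Min (db ` Basis)"
  have d: "d > 0" "\<And>b. b \<in> Basis \<Longrightarrow> d \<le> db b"
    using db(1) by (auto simp: d_def)
  have "norm (g (u + h) - g u - total_deriv g u h) \<le> e * norm h" if h: "norm h < d" for u h
  proof -
    let ?F = "\<lambda>v. g v - total_deriv g u v"
    have "(?F has_derivative (\<lambda>k. total_deriv g v k - total_deriv g u k)) (at v within ball u d)" for v
      using has_derivative_at_withinI[OF smooth_fn_has_derivative[OF test_fn_smooth[OF assms(1)]]]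
      by (intro has_derivative_diff total_deriv_has_derivative)
    moreover have "onorm (\<lambda>k. total_deriv g v k - total_deriv g u k) \<le> e" if v: "v \<in> ball u d" for v
    proof (rule onorm_le)
      fix k :: 'a
      have "norm (total_deriv g v k - total_deriv g u k)
          = norm (\<Sum>b\<in>Basis. (k \<bullet> b) *\<^sub>R (pderiv_dir b g v - pderiv_dir b g u))"
        unfolding total_deriv_def by (simp add: sum_subtractf scaleR_diff_right)
      also have "\<dots> \<le> (\<Sum>b\<in>(Basis::'a set). norm k * (e / N))"
      proof (rule order_trans[OF norm_sum sum_mono])
        fix b :: 'a
        assume b: "b \<in> Basis"
        have "norm (pderiv_dir b g v - pderiv_dir b g u) \<le> e / N"
          using db(2)[OF b, of v u] d(2)[OF b] v by (simp add: dist_norm norm_minus_commute)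
        hence "\<bar>k \<bullet> b\<bar> * norm (pderiv_dir b g v - pderiv_dir b g u) \<le> norm k * (e / N)"
          using Basis_le_norm[OF b] by (intro mult_mono) auto
        thus "norm ((k \<bullet> b) *\<^sub>R (pderiv_dir b g v - pderiv_dir b g u)) \<le> norm k * (e / N)"
          by simp
      qed
      also have "\<dots> = e * norm k"
        using N by (simp add: N_def)
      finally show "norm (total_deriv g v k - total_deriv g u k) \<le> e * norm k" .
    qed
    ultimately have "norm (?F (u + h) - ?F u) \<le> e * norm (u + h - u)"
      using h d(1) by (intro differentiable_bound[OF convex_ball]) (auto simp: dist_norm)
    moreover have "?F (u + h) - ?F u = g (u + h) - g u - total_deriv g u h"
      using linear_add[OF has_derivative_linear[OF total_deriv_has_derivative[of g u]], of u h]
      by simp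
    ultimately show ?thesis
      by simp
  qed
  thus ?thesis
    using that d(1) by blast
qed

section \<open>Superpositions of translates\<close>

definition translate_integral ::
    "'m measure \<Rightarrow> ('m \<Rightarrow> complex) \<Rightarrow> ('m \<Rightarrow> 'a::euclidean_space) \<Rightarrow> ('a \<Rightarrow> complex) \<Rightarrow> 'a \<Rightarrow> complex"
  where "translate_integral M w b g \<eta> = (\<integral>m. w m * g (\<eta> - b m) \<partial>M)"

lemma integrable_mult_bounded:
  fixes w f :: "'m \<Rightarrow> complex"
  assumes "integrable M w" "f \<in> borel_measurable M" "\<And>m. norm (f m) \<le> B"
  shows "integrable M (\<lambda>m. w m * f m)"
proof (rule Bochner_Integration.integrable_bound[OF integrable_scaleR_right[OF assms(1), of B]])
  show "(\<lambda>m. w m * f m) \<in> borel_measurable M"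
    using assms(1,2) by measurable
  have "norm (w m * f m) \<le> norm (B *\<^sub>R w m)" for m
  proof -
    have "norm (w m * f m) = norm (f m) * norm (w m)"
      by (simp add: norm_mult)
    also have "\<dots> \<le> \<bar>B\<bar> * norm (w m)"
      using assms(3)[of m] by (intro mult_right_mono) auto
    finally show ?thesis
      by simp
  qed
  thus "AE m in M. norm (w m * f m) \<le> norm (B *\<^sub>R w m)"
    by simp
qed

context
  fixes M :: "'m measure" and w :: "'m \<Rightarrow> complex" and b :: "'m \<Rightarrow> 'a::euclidean_space"
  assumes w_integrable: "integrable M w" and b_measurable [measurable]: "b \<in> borel_measurable M"
begin

lemma integrable_translates:
  assumes "test_fn g"
  shows "integrable M (\<lambda>m. w m * g (\<eta> - b m))"
proof -
  note [measurable] = test_fn_borel_measurable[OF assms]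
  obtain B where "\<And>x. norm (g x) \<le> B"
    using test_fn_bounded[OF assms] by blast
  thus ?thesis
    by (intro integrable_mult_bounded[OF w_integrable]) auto
qed

text \<open>The uniform first-order Taylor estimate of \<open>g\<close> bounds the remainder uniformly in \<open>m\<close>.\<close>
lemma translate_integral_has_derivative:
  assumes g: "test_fn g"
  shows "(translate_integral M w b g has_derivative
           (\<lambda>h. \<Sum>c\<in>Basis. (h \<bullet> c) *\<^sub>R translate_integral M w b (pderiv_dir c g) \<eta>)) (at \<eta>)"
  unfolding has_derivative_at_alt
proof (intro conjI allI impI)
  let ?T = "translate_integral M w b"
  show "bounded_linear (\<lambda>h. \<Sum>c\<in>Basis. (h \<bullet> c) *\<^sub>R ?T (pderiv_dir c g) \<eta>)"
    by (intro bounded_linear_sum) (auto intro!: bounded_linear_intros)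
  fix e :: real
  assume e: "e > 0"
  define I where "I = (\<integral>m. norm (w m) \<partial>M)"
  have I: "I \<ge> 0"
    by (simp add: I_def)
  obtain d where d: "d > 0"
    "\<And>u h. norm h < d \<Longrightarrow> norm (g (u + h) - g u - total_deriv g u h) \<le> e / (I + 1) * norm h"
    using test_fn_uniformly_differentiable[OF g, of "e / (I + 1)"] e I by auto
  have estimate: "norm (?T g (\<eta> + h) - ?T g \<eta> - (\<Sum>c\<in>Basis. (h \<bullet> c) *\<^sub>R ?T (pderiv_dir c g) \<eta>))
      \<le> e * norm h" if h: "norm h < d" for h
  proof -
    let ?R = "\<lambda>m. g (\<eta> - b m + h) - g (\<eta> - b m) - total_deriv g (\<eta> - b m) h"
    let ?E = "\<lambda>m. w m * g (\<eta> + h - b m) - w m * g (\<eta> - b m)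
                  - (\<Sum>c\<in>Basis. (h \<bullet> c) *\<^sub>R (w m * pderiv_dir c g (\<eta> - b m)))"
    have E_eq: "?E = (\<lambda>m. w m * ?R m)"
      unfolding total_deriv_def
      by (rule ext) (simp add: algebra_simps sum_distrib_left mult_scaleR_right)
    have "?T g (\<eta> + h) - ?T g \<eta> - (\<Sum>c\<in>Basis. (h \<bullet> c) *\<^sub>R ?T (pderiv_dir c g) \<eta>) = (\<integral>m. ?E m \<partial>M)"
      unfolding translate_integral_def
      using integrable_translates[OF g] integrable_translates[OF test_fn_pderiv_dir[OF g]]
      by (simp add: integrable_sum)
    also have "\<dots> = (\<integral>m. w m * ?R m \<partial>M)"
      by (simp only: E_eq)
    also have "norm \<dots> \<le> (\<integral>m. norm (w m * ?R m) \<partial>M)"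
      by (rule integral_norm_bound)
    also have "\<dots> \<le> (\<integral>m. norm (w m) * (e / (I + 1) * norm h) \<partial>M)"
    proof (rule integral_mono_AE')
      show "integrable M (\<lambda>m. norm (w m) * (e / (I + 1) * norm h))"
        using w_integrable by simp
      show "AE m in M. norm (w m * ?R m) \<le> norm (w m) * (e / (I + 1) * norm h)"
        using d(2)[OF h] by (intro AE_I2) (simp only: norm_mult mult_left_mono norm_ge_zero)
    qed (use e I in simp)
    also have "\<dots> = I / (I + 1) * e * norm h"
      by (simp add: I_def)
    also have "\<dots> \<le> e * norm h"
      using I e by (intro mult_right_mono) (auto simp: field_simps)
    finally show ?thesis .
  qed
  thus "\<exists>d>0. \<forall>y. norm (y - \<eta>) < d \<longrightarrow>
     norm (?T g y - ?T g \<eta> - (\<Sum>c\<in>Basis. ((y - \<eta>) \<bullet> c) *\<^sub>R ?T (pderiv_dir c g) \<eta>)) \<le> e * norm (y - \<eta>)"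
    using d(1) estimate[of "_ - \<eta>"] by auto
qed

lemma pderiv_dir_translate_integral:
  assumes "test_fn g" "c \<in> Basis"
  shows "pderiv_dir c (translate_integral M w b g) = translate_integral M w b (pderiv_dir c g)"
proof
  fix \<eta>
  have "pderiv_dir c (translate_integral M w b g) \<eta>
      = (\<Sum>c'\<in>Basis. (c \<bullet> c') *\<^sub>R translate_integral M w b (pderiv_dir c' g) \<eta>)"
    by (rule pderiv_dir_has_derivative[OF translate_integral_has_derivative[OF assms(1)]])
  also have "\<dots> = translate_integral M w b (pderiv_dir c g) \<eta>"
    using assms(2) by (simp add: inner_Basis if_distrib[of "\<lambda>r. r *\<^sub>R _"] sum.delta cong: if_cong)
  finally show "pderiv_dir c (translate_integral M w b g) \<eta> = translate_integral M w b (pderiv_dir c g) \<eta>" .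
qed

lemma pderivs_translate_integral:
  "test_fn g \<Longrightarrow> set is \<subseteq> Basis \<Longrightarrow> pderivs is (translate_integral M w b g) = translate_integral M w b (pderivs is g)"
  by (induction "is") (simp_all add: pderiv_dir_translate_integral test_fn_pderivs)

lemma smooth_translate_integral:
  assumes "test_fn g"
  shows "smooth_fn (translate_integral M w b g)"
  unfolding smooth_fn_def
proof (intro allI impI)
  fix "is" :: "'a list" and x
  assume B: "set is \<subseteq> Basis"
  show "pderivs is (translate_integral M w b g) differentiable at x"
    unfolding pderivs_translate_integral[OF assms B] differentiable_def
    by (rule exI, rule translate_integral_has_derivative[OF test_fn_pderivs[OF assms B]])
qed

lemma test_fn_translate_integral:
  assumes g: "test_fn g" and A: "\<And>m. m \<in> space M \<Longrightarrow> w m \<noteq> 0 \<Longrightarrow> norm (b m) \<le> A"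
  shows "test_fn (translate_integral M w b g)"
proof -
  obtain R where R: "\<And>x. g x \<noteq> 0 \<Longrightarrow> norm x \<le> R"
    using test_fn_support_bound[OF g] by blast
  have "translate_integral M w b g x = 0" if x: "norm x > R + A" for x
  proof -
    have "w m * g (x - b m) = 0" if "m \<in> space M" for m
      using A[OF that] R[of "x - b m"] x norm_triangle_sub[of x "b m"] by force
    thus ?thesis
      unfolding translate_integral_def by (simp add: Bochner_Integration.integral_cong[where g = "\<lambda>_. 0"])
  qed
  hence "{x. translate_integral M w b g x \<noteq> 0} \<subseteq> cball 0 (R + A)"
    by (force simp: not_le)
  thus ?thesis
    unfolding test_fn_iff_bounded using smooth_translate_integral[OF g] bounded_subset by blast
qed

end

lemma lborel_distr_reflect: "distr lborel borel (\<lambda>x. t - x) = (lborel :: 'a::euclidean_space measure)"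
proof -
  have "lborel = density (distr lborel borel (\<lambda>x. t + (-1) *\<^sub>R x)) (\<lambda>_. \<bar>-1::real\<bar> ^ DIM('a))"
    by (rule lborel_affine) simp
  thus ?thesis
    by (simp add: density_1)
qed

lemma lborel_integral_reflect:
  fixes g :: "'a::euclidean_space \<Rightarrow> 'b::{banach, second_countable_topology}"
  assumes "g \<in> borel_measurable borel"
  shows "(\<integral>\<eta>. g (t - \<eta>) \<partial>lborel) = (\<integral>\<eta>. g \<eta> \<partial>lborel)"
  using integral_distr[of "\<lambda>x. t - x" lborel borel g, symmetric] assms
  by (simp add: lborel_distr_reflect)

lemma lborel_integrable_reflect:
  fixes g :: "'a::euclidean_space \<Rightarrow> 'b::{banach, second_countable_topology}"
  assumes "integrable lborel g"
  shows "integrable lborel (\<lambda>\<eta>. g (t - \<eta>))"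
  using integrable_distr_eq[of "\<lambda>x. t - x" lborel borel g] assms
  by (simp add: lborel_distr_reflect)

lemma integrable_translates_product:
  fixes w :: "'m \<Rightarrow> complex" and g :: "'a::euclidean_space \<Rightarrow> complex"
  assumes "sigma_finite_measure M" "integrable M w" "integrable lborel g"
    and [measurable]: "c \<in> borel_measurable M"
  shows "integrable (M \<Otimes>\<^sub>M lborel) (\<lambda>(\<xi>, \<eta>). norm (w \<xi>) * norm (g (c \<xi> - \<eta>)))"
proof -
  interpret pair_sigma_finite M "lborel :: 'a measure"
    using assms(1) lborel.sigma_finite_measure_axioms by (simp add: pair_sigma_finite_def)
  have [measurable]: "g \<in> borel_measurable borel" "w \<in> borel_measurable M"
    using assms(2,3) by auto
  have "(\<integral>\<eta>. norm (g (c \<xi> - \<eta>)) \<partial>lborel) = (\<integral>\<eta>. norm (g \<eta>) \<partial>lborel)" for \<xi>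
    by (rule lborel_integral_reflect) measurable
  thus ?thesis
    using assms(2) lborel_integrable_reflect[OF integrable_norm[OF assms(3)]]
    by (intro Fubini_integrable) auto
qed

text \<open>Fubini, followed by the substitution \<open>\<zeta> = c \<xi> - \<eta>\<close> in the inner integral.\<close>
lemma integral_translates_swap:
  fixes w :: "'m \<Rightarrow> complex" and g F :: "'a::euclidean_space \<Rightarrow> complex"
  assumes "sigma_finite_measure M" "integrable M w" "integrable lborel g"
    and [measurable]: "c \<in> borel_measurable M" "F \<in> borel_measurable borel"
    and F_bound: "\<And>\<eta>. norm (F \<eta>) \<le> B"
  shows "(\<integral>\<eta>. F \<eta> * (\<integral>\<xi>. w \<xi> * g (c \<xi> - \<eta>) \<partial>M) \<partial>lborel)
       = (\<integral>\<xi>. w \<xi> * (\<integral>\<zeta>. g \<zeta> * F (c \<xi> - \<zeta>) \<partial>lborel) \<partial>M)"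
proof -
  interpret pair_sigma_finite M "lborel :: 'a measure"
    using assms(1) lborel.sigma_finite_measure_axioms by (simp add: pair_sigma_finite_def)
  have [measurable]: "g \<in> borel_measurable borel" "w \<in> borel_measurable M"
    using assms(2,3) by auto
  let ?K = "\<lambda>(\<xi>, \<eta>). w \<xi> * g (c \<xi> - \<eta>) * F \<eta>"
  have "integrable (M \<Otimes>\<^sub>M lborel) (\<lambda>p. B *\<^sub>R (case p of (\<xi>, \<eta>) \<Rightarrow> norm (w \<xi>) * norm (g (c \<xi> - \<eta>))))"
    using integrable_translates_product[OF assms(1-4)] by auto
  hence K_integrable: "integrable (M \<Otimes>\<^sub>M lborel) ?K"
    by (rule Bochner_Integration.integrable_bound)
       (auto intro!: AE_I2 simp: norm_mult mult_left_mono mult.commute[of B] F_bound order_trans[OF _ abs_ge_self])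
  have "(\<integral>\<eta>. F \<eta> * (\<integral>\<xi>. w \<xi> * g (c \<xi> - \<eta>) \<partial>M) \<partial>lborel) = (\<integral>\<eta>. (\<integral>\<xi>. ?K (\<xi>, \<eta>) \<partial>M) \<partial>lborel)"
    by (simp add: mult.commute)
  also have "\<dots> = (\<integral>\<xi>. (\<integral>\<eta>. ?K (\<xi>, \<eta>) \<partial>lborel) \<partial>M)"
    using Fubini_integral[OF K_integrable] by simp
  also have "\<dots> = (\<integral>\<xi>. w \<xi> * (\<integral>\<eta>. g (c \<xi> - \<eta>) * F \<eta> \<partial>lborel) \<partial>M)"
    by (simp add: mult.assoc)
  also have "\<dots> = (\<integral>\<xi>. w \<xi> * (\<integral>\<zeta>. g \<zeta> * F (c \<xi> - \<zeta>) \<partial>lborel) \<partial>M)"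
  proof -
    have "(\<integral>\<eta>. g (c \<xi> - \<eta>) * F \<eta> \<partial>lborel) = (\<integral>\<zeta>. g \<zeta> * F (c \<xi> - \<zeta>) \<partial>lborel)" for \<xi>
      using lborel_integral_reflect[of "\<lambda>\<zeta>. g \<zeta> * F (c \<xi> - \<zeta>)" "c \<xi>"] by simp
    thus ?thesis
      by simp
  qed
  finally show ?thesis .
qed

section \<open>The iterated integrals\<close>

lemma wave_hat_abs_le: "\<bar>wave_hat s \<xi>\<bar> \<le> \<bar>s\<bar>"
proof (cases "\<xi> = 0")
  case False
  have "\<bar>sin (s * norm \<xi>)\<bar> \<le> \<bar>s\<bar> * norm \<xi>"
    using abs_sin_x_le_abs_x[of "s * norm \<xi>"] by (simp add: abs_mult)
  thus ?thesis
    using False by (simp add: wave_hat_def abs_div pos_divide_le_eq)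
qed (simp add: wave_hat_def)

lemma wave_hat_uminus [simp]: "wave_hat s (- \<xi>) = wave_hat s \<xi>"
  by (simp add: wave_hat_def)

lemma borel_measurable_wave_hat [measurable]: "wave_hat s \<in> borel_measurable borel"
  unfolding wave_hat_def by measurable

lemma borel_measurable_cis [measurable]: "cis \<in> borel_measurable borel"
  by (intro borel_measurable_continuous_onI continuous_intros)

interpretation lborel_product: product_sigma_finite "\<lambda>_::nat. (lborel :: 'a::euclidean_space measure)"
  by (simp add: product_sigma_finite_def lborel.sigma_finite_measure_axioms)

lemma sum_lessThan_upd:
  fixes j k :: nat
  assumes "j \<le> k"
  shows "(\<Sum>i<j. (\<xi>(k := \<zeta>)) i) = (\<Sum>i<j. \<xi> i :: 'a::comm_monoid_add)"
proof (intro sum.cong refl)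
  fix i
  assume "i \<in> {..<j}"
  with assms have "i \<noteq> k"
    by auto
  thus "(\<xi>(k := \<zeta>)) i = \<xi> i"
    by simp
qed

locale wave_chain =
  fixes h :: "nat \<Rightarrow> 'a::euclidean_space \<Rightarrow> complex" and s :: "nat \<Rightarrow> real" and n :: nat
  assumes h_test: "\<And>i. i < n \<Longrightarrow> test_fn (h i)"
begin

abbreviation Pi_lborel :: "nat \<Rightarrow> (nat \<Rightarrow> 'a) measure" where
  "Pi_lborel k \<equiv> PiM {..<k} (\<lambda>_. lborel)"

definition weight :: "nat \<Rightarrow> (nat \<Rightarrow> 'a) \<Rightarrow> complex" where
  "weight k \<xi> = (\<Prod>i<k. h i (\<xi> i)) * (\<Prod>j<k. complex_of_real (wave_hat (s j) (\<Sum>i\<le>j. \<xi> i)))"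

text \<open>With \<open>\<phi> i = fourier (h i)\<close>, \<open>chain_integral (Suc k)\<close> is the paper's \<open>\<phi>\<^sub>k\<^sub>+\<^sub>1\<close>
  (\<open>wave_phi k\<close>) and \<open>fourier (h k) * chain_integral k\<close> its \<open>\<psi>\<^sub>k\<^sub>+\<^sub>1\<close> (\<open>wave_psi k\<close>).\<close>
definition chain_integral :: "nat \<Rightarrow> 'a \<Rightarrow> complex" where
  "chain_integral k y = (\<integral>\<xi>. weight k \<xi> * cis (- ((\<Sum>i<k. \<xi> i) \<bullet> y)) \<partial>Pi_lborel k)"

lemma integrable_weight:
  assumes "k \<le> n"
  shows "integrable (Pi_lborel k) (weight k)"
proof -
  have "integrable (Pi_lborel k) (\<lambda>\<xi>. \<Prod>i\<in>{..<k}. h i (\<xi> i))"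
    using assms h_test by (intro lborel_product.product_integrable_prod test_fn_integrable) auto
  moreover have "norm (\<Prod>j<k. complex_of_real (wave_hat (s j) (\<Sum>i\<le>j. \<xi> i))) \<le> (\<Prod>j<k. \<bar>s j\<bar>)" for \<xi>
    unfolding prod_norm[symmetric] by (intro prod_mono) (simp add: wave_hat_abs_le)
  ultimately show ?thesis
    unfolding weight_def by (intro integrable_mult_bounded) auto
qed

lemma weight_support_bound:
  assumes "k \<le> n"
  obtains A where "\<And>\<xi>. weight k \<xi> \<noteq> 0 \<Longrightarrow> norm (\<Sum>i<k. \<xi> i) \<le> A"
proof -
  have "\<forall>i. \<exists>R. i < n \<longrightarrow> (\<forall>x. h i x \<noteq> 0 \<longrightarrow> norm x \<le> R)"
    by (metis test_fn_support_bound h_test)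
  then obtain R where R: "\<And>i x. i < n \<Longrightarrow> h i x \<noteq> 0 \<Longrightarrow> norm x \<le> R i"
    by metis
  have "norm (\<Sum>i<k. \<xi> i) \<le> (\<Sum>i<k. R i)" if "weight k \<xi> \<noteq> 0" for \<xi>
  proof -
    have "norm (\<xi> i) \<le> R i" if "i < k" for i
      using R[of i "\<xi> i"] \<open>weight k \<xi> \<noteq> 0\<close> that assms by (auto simp: weight_def)
    thus ?thesis
      using norm_sum[of "\<lambda>i. \<xi> i" "{..<k}"] sum_mono[of "{..<k}" "\<lambda>i. norm (\<xi> i)" R] by auto
  qed
  thus ?thesis
    using that by blast
qed

lemma chain_integral_0: "chain_integral 0 y = 1"
  by (simp add: chain_integral_def weight_def PiM_empty lebesgue_integral_count_space_finite measure_count_space)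

lemma weight_Suc_upd:
  "weight (Suc k) (\<xi>(k := \<zeta>)) =
     weight k \<xi> * h k \<zeta> * complex_of_real (wave_hat (s k) ((\<Sum>i<k. \<xi> i) + \<zeta>))"
proof -
  have "(\<Prod>i<k. h i ((\<xi>(k := \<zeta>)) i)) = (\<Prod>i<k. h i (\<xi> i))"
    by (intro prod.cong) auto
  moreover have "(\<Prod>j<k. complex_of_real (wave_hat (s j) (\<Sum>i\<le>j. (\<xi>(k := \<zeta>)) i)))
      = (\<Prod>j<k. complex_of_real (wave_hat (s j) (\<Sum>i\<le>j. \<xi> i)))"
    by (intro prod.cong refl) (simp add: sum_lessThan_upd flip: lessThan_Suc_atMost)
  moreover have "(\<Sum>i\<le>k. (\<xi>(k := \<zeta>)) i) = (\<Sum>i<k. \<xi> i) + \<zeta>"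
    by (simp add: sum_lessThan_upd flip: lessThan_Suc_atMost)
  ultimately show ?thesis
    unfolding weight_def by (simp add: mult_ac)
qed

lemma chain_integral_Suc:
  assumes "k < n"
  shows "chain_integral (Suc k) y =
    (\<integral>\<xi>. weight k \<xi> * (\<integral>\<zeta>. h k \<zeta> * complex_of_real (wave_hat (s k) ((\<Sum>i<k. \<xi> i) + \<zeta>))
                                  * cis (- (((\<Sum>i<k. \<xi> i) + \<zeta>) \<bullet> y)) \<partial>lborel) \<partial>Pi_lborel k)"
proof -
  have "integrable (Pi_lborel (Suc k)) (\<lambda>\<xi>. weight (Suc k) \<xi> * cis (- ((\<Sum>i<Suc k. \<xi> i) \<bullet> y)))"
    using assms by (intro integrable_mult_bounded[OF integrable_weight, of _ _ 1]) auto
  hence "chain_integral (Suc k) y =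
      (\<integral>\<xi>. (\<integral>\<zeta>. weight (Suc k) (\<xi>(k := \<zeta>)) * cis (- ((\<Sum>i<Suc k. (\<xi>(k := \<zeta>)) i) \<bullet> y))
         \<partial>lborel) \<partial>Pi_lborel k)"
    unfolding chain_integral_def lessThan_Suc by (intro lborel_product.product_integral_insert) auto
  thus ?thesis
    by (simp add: weight_Suc_upd sum_lessThan_upd mult.assoc)
qed

definition chain_kernel :: "nat \<Rightarrow> 'a \<Rightarrow> 'a \<Rightarrow> complex" where
  "chain_kernel k y \<eta> = cis (\<eta> \<bullet> y) * (\<integral>\<xi>. weight k \<xi> * h k (- (\<Sum>i<k. \<xi> i) - \<eta>) \<partial>Pi_lborel k)"

lemma test_fn_chain_kernel:
  assumes "k < n"
  shows "test_fn (chain_kernel k y)"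
proof -
  obtain A where A: "\<And>\<xi>. weight k \<xi> \<noteq> 0 \<Longrightarrow> norm (\<Sum>i<k. \<xi> i) \<le> A"
    using weight_support_bound assms by (metis less_imp_le)
  have "test_fn (translate_integral (Pi_lborel k) (weight k) (\<lambda>\<xi>. - (\<Sum>i<k. \<xi> i)) (\<lambda>x. h k (- x)))"
    using assms A by (intro test_fn_translate_integral integrable_weight test_fn_reflect h_test) auto
  moreover have "chain_kernel k y =
      (\<lambda>\<eta>. cis (\<eta> \<bullet> y) * translate_integral (Pi_lborel k) (weight k) (\<lambda>\<xi>. - (\<Sum>i<k. \<xi> i)) (\<lambda>x. h k (- x)) \<eta>)"
    unfolding chain_kernel_def translate_integral_def by (simp add: minus_diff_commute)
  ultimately show ?thesis
    by (simp add: test_fn_mult_smooth smooth_cis_inner)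
qed

lemma integral_chain_kernel_swap:
  assumes "k < n" "F \<in> borel_measurable borel" "\<And>\<eta>. norm (F \<eta>) \<le> B"
  shows "(\<integral>\<eta>. F \<eta> * (\<integral>\<xi>. weight k \<xi> * h k (- (\<Sum>i<k. \<xi> i) - \<eta>) \<partial>Pi_lborel k) \<partial>lborel)
       = (\<integral>\<xi>. weight k \<xi> * (\<integral>\<zeta>. h k \<zeta> * F (- (\<Sum>i<k. \<xi> i) - \<zeta>) \<partial>lborel) \<partial>Pi_lborel k)"
  using assms
  by (intro integral_translates_swap lborel_product.sigma_finite integrable_weight
      test_fn_integrable h_test) auto

lemma fourier_chain_kernel:
  assumes "k < n"
  shows "fourier (chain_kernel k y) z = fourier (h k) (y - z) * chain_integral k (y - z)"
proof -
  let ?a = "\<lambda>\<xi>. \<Sum>i<k. \<xi> i"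
  have phase: "cis (- (z \<bullet> \<eta>)) * cis (\<eta> \<bullet> y) = cis (\<eta> \<bullet> (y - z))" for \<eta>
    by (simp add: cis_mult inner_diff_right inner_commute[of z])
  have shift: "cis ((- ?a \<xi> - \<zeta>) \<bullet> (y - z)) = cis (- (?a \<xi> \<bullet> (y - z))) * cis (- ((y - z) \<bullet> \<zeta>))"
    for \<xi> \<zeta>
  proof -
    have "(- ?a \<xi> - \<zeta>) \<bullet> (y - z) = - (?a \<xi> \<bullet> (y - z)) + - ((y - z) \<bullet> \<zeta>)"
      by (simp add: inner_diff_left inner_commute[of \<zeta>])
    thus ?thesis
      by (simp add: cis_mult)
  qed
  have "fourier (chain_kernel k y) z
      = (\<integral>\<eta>. cis (\<eta> \<bullet> (y - z)) * (\<integral>\<xi>. weight k \<xi> * h k (- ?a \<xi> - \<eta>) \<partial>Pi_lborel k) \<partial>lborel)"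
    unfolding fourier_def chain_kernel_def by (simp add: mult.assoc[symmetric] phase)
  also have "\<dots> = (\<integral>\<xi>. weight k \<xi> * (\<integral>\<zeta>. h k \<zeta> * cis ((- ?a \<xi> - \<zeta>) \<bullet> (y - z)) \<partial>lborel) \<partial>Pi_lborel k)"
    using assms by (intro integral_chain_kernel_swap[where B = 1]) auto
  also have "\<dots> = (\<integral>\<xi>. weight k \<xi> * cis (- (?a \<xi> \<bullet> (y - z))) * fourier (h k) (y - z) \<partial>Pi_lborel k)"
  proof (intro Bochner_Integration.integral_cong refl)
    fix \<xi>
    have "(\<integral>\<zeta>. h k \<zeta> * cis ((- ?a \<xi> - \<zeta>) \<bullet> (y - z)) \<partial>lborel)
        = (\<integral>\<zeta>. cis (- (?a \<xi> \<bullet> (y - z))) * (cis (- ((y - z) \<bullet> \<zeta>)) * h k \<zeta>) \<partial>lborel)"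
      by (simp add: shift mult_ac)
    thus "weight k \<xi> * (\<integral>\<zeta>. h k \<zeta> * cis ((- ?a \<xi> - \<zeta>) \<bullet> (y - z)) \<partial>lborel)
        = weight k \<xi> * cis (- (?a \<xi> \<bullet> (y - z))) * fourier (h k) (y - z)"
      by (simp add: fourier_def mult.assoc)
  qed
  finally show ?thesis
    by (simp add: chain_integral_def mult.commute)
qed

lemma integral_chain_kernel_wave_hat:
  assumes "k < n"
  shows "(\<integral>\<eta>. chain_kernel k y \<eta> * complex_of_real (wave_hat (s k) \<eta>) \<partial>lborel) = chain_integral (Suc k) y"
proof -
  let ?a = "\<lambda>\<xi>. \<Sum>i<k. \<xi> i"
  let ?F = "\<lambda>\<eta>. cis (\<eta> \<bullet> y) * complex_of_real (wave_hat (s k) \<eta>)"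
  have "norm (?F \<eta>) \<le> \<bar>s k\<bar>" for \<eta>
    by (simp add: norm_mult wave_hat_abs_le)
  hence "(\<integral>\<eta>. chain_kernel k y \<eta> * complex_of_real (wave_hat (s k) \<eta>) \<partial>lborel)
      = (\<integral>\<xi>. weight k \<xi> * (\<integral>\<zeta>. h k \<zeta> * ?F (- ?a \<xi> - \<zeta>) \<partial>lborel) \<partial>Pi_lborel k)"
    unfolding chain_kernel_def using assms
    by (subst integral_chain_kernel_swap[symmetric]) (auto simp: mult_ac)
  also have "\<dots> = chain_integral (Suc k) y"
  proof -
    have "h k \<zeta> * ?F (- ?a \<xi> - \<zeta>)
        = h k \<zeta> * complex_of_real (wave_hat (s k) (?a \<xi> + \<zeta>)) * cis (- ((?a \<xi> + \<zeta>) \<bullet> y))" for \<xi> \<zeta>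
    proof -
      have "- ?a \<xi> - \<zeta> = - (?a \<xi> + \<zeta>)"
        by simp
      thus ?thesis
        by (simp only: wave_hat_uminus inner_minus_left mult_ac)
    qed
    thus ?thesis
      unfolding chain_integral_Suc[OF assms] by (simp only:)
  qed
  finally show ?thesis .
qed

lemma chain_integral_convolution:
  assumes "k < n"
    and T: "\<And>\<phi>. schwartz \<phi> \<Longrightarrow> T (fourier \<phi>) = (\<integral>\<xi>. \<phi> \<xi> * complex_of_real (wave_hat (s k) \<xi>) \<partial>lborel)"
  shows "T (\<lambda>z. fourier (h k) (y - z) * chain_integral k (y - z)) = chain_integral (Suc k) y"
proof -
  have "(\<lambda>z. fourier (h k) (y - z) * chain_integral k (y - z)) = fourier (chain_kernel k y)"
    using fourier_chain_kernel[OF assms(1)] by (simp add: fun_eq_iff)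
  thus ?thesis
    using T[OF schwartz_test_fn[OF test_fn_chain_kernel[OF assms(1)]]]
      integral_chain_kernel_wave_hat[OF assms(1)] by simp
qed

end

theorem proposition2p1:
  fixes G :: "real \<Rightarrow> ('a::euclidean_space \<Rightarrow> complex) \<Rightarrow> complex"
    and n :: nat and tt :: "nat \<Rightarrow> real" and x :: 'a
    and h :: "nat \<Rightarrow> 'a \<Rightarrow> complex"
  assumes G_fourier: "\<And>s \<phi>. s > 0 \<Longrightarrow> schwartz \<phi> \<Longrightarrow>
              G s (fourier \<phi>) = (\<integral>\<xi>. \<phi> \<xi> * complex_of_real (wave_hat s \<xi>) \<partial>lborel)"
    and G_rapid: "\<And>s \<psi>. s > 0 \<Longrightarrow> schwartz \<psi> \<Longrightarrow> schwartz (conv_dist \<psi> (G s))"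
    and n_pos: "n \<ge> 1"
    and t_pos: "0 < tt 0"
    and t_incr: "\<And>j. j < n \<Longrightarrow> tt j < tt (Suc j)"
    and h_test: "\<And>i. i < n \<Longrightarrow> test_fn (h i)"
  shows "f_pair G n tt x (\<lambda>i. fourier (h i)) =
    (\<integral>\<xi>. (\<Prod>i<n. h i (\<xi> i)) * cis (- ((\<Sum>i<n. \<xi> i) \<bullet> x)) *
          (\<Prod>j<n. cnj (complex_of_real (wave_hat (tt (Suc j) - tt j) (\<Sum>i\<le>j. \<xi> i))))
      \<partial>(PiM {..<n} (\<lambda>_. lborel)))"
proof -
  define s where "s j = tt (Suc j) - tt j" for j
  interpret wave_chain h s n
    by unfold_locales (rule h_test)
  have phi: "conv_dist (\<lambda>y. fourier (h k) y * chain_integral k y) (G (s k)) = chain_integral (Suc k)"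
    if "k < n" for k
    using chain_integral_convolution[OF that G_fourier] t_incr[OF that]
    by (simp add: fun_eq_iff conv_dist_def s_def)
  have psi: "wave_psi G (\<lambda>i. fourier (h i)) s k = (\<lambda>y. fourier (h k) y * chain_integral k y)"
    if "k < n" for k
    using that by (induction k) (simp_all add: chain_integral_0 phi)
  have "f_pair G n tt x (\<lambda>i. fourier (h i)) = chain_integral n x"
    using phi[of "n - 1"] psi[of "n - 1"] n_pos
    by (simp add: f_pair_def wave_phi_def s_def[symmetric])
  thus ?thesis
    by (simp add: chain_integral_def weight_def s_def mult_ac)
qed

end
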